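(* Let $G$ be a nilpotent group of class $c$ and let $n=\lceil c/2\rceil$. Then the image of the natural homomorphism $\gamma_n(G)\otimes G\to G\otimes G$ (induced by inclusion) is abelian.
   Context: $\gamma_n(G)$ is the $n$-th term of the lower central series. Conventions: ${}^g h = ghg^{-1}$. For $N\trianglelefteq G$, $N\otimes G$ is generated by symbols $x\otimes g$ ($x\in N$, $g\in G$) subject to $xx'\otimes g=({}^x x'\otimes {}^x g)(x\otimes g)$ and $x\otimes gg'=(x\otimes g)({}^g x\otimes {}^g g')$; $G\otimes G$ is the case $N=G$. *)

theory Defs
  imports Complex_Main "HOL-Algebra.Algebra"
begin

(* lcs G k = gamma_(k+1)(G):  gamma_1 = G,  gamma_(i+1) = [gamma_i, G] *)
fun lcs :: "('a, 'b) monoid_scheme \<Rightarrow> nat \<Rightarrow> 'a set" where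
  "lcs G 0 = carrier G"
| "lcs G (Suc k) = generate G
     (\<Union>x \<in> lcs G k. \<Union>g \<in> carrier G. {x \<otimes>\<^bsub>G\<^esub> g \<otimes>\<^bsub>G\<^esub> inv\<^bsub>G\<^esub> x \<otimes>\<^bsub>G\<^esub> inv\<^bsub>G\<^esub> g})"

(* gamma G n = gamma_n(G) for n >= 1 (gamma 0 is set to G by convention) *)
definition gamma :: "('a, 'b) monoid_scheme \<Rightarrow> nat \<Rightarrow> 'a set" where
  "gamma G n = lcs G (n - 1)"

definition nilpotent_class :: "('a, 'b) monoid_scheme \<Rightarrow> nat \<Rightarrow> bool" where
  "nilpotent_class G c \<longleftrightarrow>
     gamma G (c + 1) = {\<one>\<^bsub>G\<^esub>} \<and> (\<forall>k < c. gamma G (k + 1) \<noteq> {\<one>\<^bsub>G\<^esub>})"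

(* letters: (True,(x,g)) stands for the generator x\<otimes>g, (False,(x,g)) for its inverse *)
type_synonym 'a tletter = "bool \<times> ('a \<times> 'a)"
type_synonym 'a tword = "'a tletter list"

definition gconj :: "('a, 'b) monoid_scheme \<Rightarrow> 'a \<Rightarrow> 'a \<Rightarrow> 'a" where
  "gconj G g h = g \<otimes>\<^bsub>G\<^esub> h \<otimes>\<^bsub>G\<^esub> inv\<^bsub>G\<^esub> g"

definition tgen :: "'a \<Rightarrow> 'a \<Rightarrow> 'a tword" where
  "tgen x g = [(True, (x, g))]"

definition winv :: "'a tword \<Rightarrow> 'a tword" where
  "winv w = rev (map (\<lambda>(b, p). (\<not> b, p)) w)"

definition tletters :: "('a, 'b) monoid_scheme \<Rightarrow> 'a set \<Rightarrow> 'a tletter set" where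
  "tletters G N = UNIV \<times> (N \<times> carrier G)"

definition trelators :: "('a, 'b) monoid_scheme \<Rightarrow> 'a set \<Rightarrow> 'a tword set" where
  "trelators G N =
     {tgen (x \<otimes>\<^bsub>G\<^esub> x') g @ winv (tgen (gconj G x x') (gconj G x g) @ tgen x g)
        | x x' g. x \<in> N \<and> x' \<in> N \<and> g \<in> carrier G}
   \<union> {tgen x (g \<otimes>\<^bsub>G\<^esub> g') @ winv (tgen x g @ tgen (gconj G g x) (gconj G g g'))
        | x g g'. x \<in> N \<and> g \<in> carrier G \<and> g' \<in> carrier G}"

inductive tcong :: "('a, 'b) monoid_scheme \<Rightarrow> 'a set \<Rightarrow> 'a tword \<Rightarrow> 'a tword \<Rightarrow> bool"
  for G N where
  refl: "tcong G N w w"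
| sym: "tcong G N u v \<Longrightarrow> tcong G N v u"
| trans: "tcong G N u v \<Longrightarrow> tcong G N v w \<Longrightarrow> tcong G N u w"
| ctxt: "tcong G N u v \<Longrightarrow> tcong G N (a @ u @ b) (a @ v @ b)"
| cancel: "l \<in> tletters G N \<Longrightarrow> tcong G N ([l] @ winv [l]) []"
| rel: "r \<in> trelators G N \<Longrightarrow> tcong G N r []"

definition tclass :: "('a, 'b) monoid_scheme \<Rightarrow> 'a set \<Rightarrow> 'a tword \<Rightarrow> 'a tword set" where
  "tclass G N w = {v. set v \<subseteq> tletters G N \<and> tcong G N w v}"

definition trep :: "'a tword set \<Rightarrow> 'a tword" where
  "trep A = (SOME w. w \<in> A)"

(* the group N \<otimes> G; the tensor square G \<otimes> G is tensor G (carrier G) *)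
definition tensor :: "('a, 'b) monoid_scheme \<Rightarrow> 'a set \<Rightarrow> 'a tword set monoid" where
  "tensor G N =
     \<lparr> carrier = tclass G N ` {w. set w \<subseteq> tletters G N},
       monoid.mult = (\<lambda>A B. tclass G N (trep A @ trep B)),
       monoid.one = tclass G N [] \<rparr>"

(* the natural homomorphism N \<otimes> G \<rightarrow> G \<otimes> G induced by the inclusion N \<subseteq> G:
   x\<otimes>g \<mapsto> x\<otimes>g on generators, i.e. a class of words is sent to the class of the same word *)
definition tensor_incl :: "('a, 'b) monoid_scheme \<Rightarrow> 'a set \<Rightarrow> 'a tword set \<Rightarrow> 'a tword set" where
  "tensor_incl G N A = tclass G (carrier G) (trep A)"

end

theory Submission
  imports Defs
begin

text \<open>
  Write \<open>x \<boxtimes> g\<close> for the generator \<open>x \<otimes> g\<close> of \<open>G \<otimes> G\<close>. The defining relations give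
  \<open>(m \<boxtimes> n)(a \<boxtimes> b)(m \<boxtimes> n)\<^sup>-\<^sup>1 = \<^sup>ka \<boxtimes> \<^sup>kb\<close> with \<open>k = [m, n]\<close>. For \<open>x, y \<in> \<gamma>\<^sub>n\<close> and
  \<open>k = [x, g] \<in> \<gamma>\<^sub>n\<^sub>+\<^sub>1\<close>, the bound \<open>2n \<ge> c\<close> makes \<open>k\<close> centralise \<open>\<gamma>\<^sub>n\<close>, and
  \<open>\<^sup>kh = [k, h] h\<close> with \<open>[k, h] \<in> \<gamma>\<^sub>n\<^sub>+\<^sub>2\<close>. So \<open>x \<boxtimes> g\<close> and \<open>y \<boxtimes> h\<close> commute as soon as
  \<open>y \<boxtimes> [k, h] h = y \<boxtimes> h\<close>, which follows from the vanishing of \<open>y \<boxtimes> z\<close> for \<open>y \<in> \<gamma>\<^sub>i\<close>,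
  \<open>z \<in> \<gamma>\<^sub>j\<close>, \<open>i + j \<ge> c + 2\<close> and \<open>2i \<ge> c\<close>. That vanishing is proved by descending
  induction on \<open>i + j\<close> and ascending induction on \<open>j\<close>: for \<open>z = [w, f]\<close>, expanding
  \<open>y \<boxtimes> wf\<close> in two ways leaves exactly the factor \<open>y \<boxtimes> [w, f]\<close>. The image of
  \<open>\<gamma>\<^sub>n \<otimes> G\<close> is generated by these pairwise commuting elements, hence abelian.
\<close>

section \<open>Commutators and the lower central series\<close>

definition commutator :: "('a, 'b) monoid_scheme \<Rightarrow> 'a \<Rightarrow> 'a \<Rightarrow> 'a" where
  "commutator G x y = x \<otimes>\<^bsub>G\<^esub> y \<otimes>\<^bsub>G\<^esub> inv\<^bsub>G\<^esub> x \<otimes>\<^bsub>G\<^esub> inv\<^bsub>G\<^esub> y"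

context group
begin

lemma inv_mult_cancel_left [simp]:
  "x \<in> carrier G \<Longrightarrow> y \<in> carrier G \<Longrightarrow> inv x \<otimes> (x \<otimes> y) = y"
  by (simp add: m_assoc [symmetric])

lemma mult_inv_cancel_left [simp]:
  "x \<in> carrier G \<Longrightarrow> y \<in> carrier G \<Longrightarrow> x \<otimes> (inv x \<otimes> y) = y"
  by (simp add: m_assoc [symmetric])

lemmas group_simps = m_assoc inv_mult_group commutator_def gconj_def

lemma commutator_closed [simp]:
  "x \<in> carrier G \<Longrightarrow> y \<in> carrier G \<Longrightarrow> commutator G x y \<in> carrier G"
  by (simp add: commutator_def)

lemma gconj_closed [simp]: "g \<in> carrier G \<Longrightarrow> x \<in> carrier G \<Longrightarrow> gconj G g x \<in> carrier G"
  by (simp add: gconj_def)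

lemma gconj_one_left [simp]: "x \<in> carrier G \<Longrightarrow> gconj G \<one> x = x"
  by (simp add: gconj_def)

lemma gconj_one_right [simp]: "g \<in> carrier G \<Longrightarrow> gconj G g \<one> = \<one>"
  by (simp add: gconj_def)

lemma gconj_mult:
  "g \<in> carrier G \<Longrightarrow> x \<in> carrier G \<Longrightarrow> y \<in> carrier G \<Longrightarrow>
   gconj G g (x \<otimes> y) = gconj G g x \<otimes> gconj G g y"
  by (simp add: group_simps)

lemma gconj_inv:
  "g \<in> carrier G \<Longrightarrow> x \<in> carrier G \<Longrightarrow> gconj G g (inv x) = inv (gconj G g x)"
  by (simp add: group_simps)

lemma gconj_gconj:
  "g \<in> carrier G \<Longrightarrow> h \<in> carrier G \<Longrightarrow> x \<in> carrier G \<Longrightarrow>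
   gconj G g (gconj G h x) = gconj G (g \<otimes> h) x"
  by (simp add: group_simps)

lemma gconj_gconj_conj:
  "g \<in> carrier G \<Longrightarrow> x \<in> carrier G \<Longrightarrow> y \<in> carrier G \<Longrightarrow>
   gconj G (gconj G g x) (gconj G g y) = gconj G (g \<otimes> x) y"
  by (simp add: group_simps)

lemma gconj_commutator:
  "g \<in> carrier G \<Longrightarrow> x \<in> carrier G \<Longrightarrow> y \<in> carrier G \<Longrightarrow>
   gconj G g (commutator G x y) = commutator G (gconj G g x) (gconj G g y)"
  by (simp add: group_simps)

lemma gconj_eq_commutator_mult:
  "g \<in> carrier G \<Longrightarrow> x \<in> carrier G \<Longrightarrow> gconj G g x = commutator G g x \<otimes> x"
  by (simp add: group_simps)

lemma inv_commutator:
  "x \<in> carrier G \<Longrightarrow> y \<in> carrier G \<Longrightarrow> inv (commutator G x y) = commutator G y x"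
  by (simp add: group_simps)

lemma commutator_eq_one_iff:
  "x \<in> carrier G \<Longrightarrow> y \<in> carrier G \<Longrightarrow> commutator G x y = \<one> \<longleftrightarrow> x \<otimes> y = y \<otimes> x"
proof -
  assume xy: "x \<in> carrier G" "y \<in> carrier G"
  then have "commutator G x y = (x \<otimes> y) \<otimes> inv (y \<otimes> x)"
    by (simp add: commutator_def m_assoc inv_mult_group)
  with xy show ?thesis
    by (simp add: inv_solve_right')
qed

lemma gconj_eq_self:
  "g \<in> carrier G \<Longrightarrow> x \<in> carrier G \<Longrightarrow> g \<otimes> x = x \<otimes> g \<Longrightarrow> gconj G g x = x"
  by (simp add: gconj_def m_assoc)

lemma hall_witt:
  assumes "x \<in> carrier G" "w \<in> carrier G" "f \<in> carrier G"
  shows "commutator G (gconj G f x) (commutator G w f) =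
         commutator G (commutator G f x) (gconj G x w) \<otimes> commutator G (commutator G x w) (gconj G w f)"
  using assms by (simp add: group_simps)

lemma lcs_Suc_eq:
  "lcs G (Suc k) = generate G (\<Union>x \<in> lcs G k. \<Union>g \<in> carrier G. {commutator G x g})"
  by (simp add: commutator_def)

declare lcs.simps(2) [simp del]

lemma lcs_normal: "lcs G k \<lhd> G"
proof (induction k)
  case 0
  show ?case by (simp add: normal_self)
next
  case (Suc k)
  show ?case
    unfolding lcs_Suc_eq
  proof (rule normal_generateI)
    show "(\<Union>x \<in> lcs G k. \<Union>g \<in> carrier G. {commutator G x g}) \<subseteq> carrier G"
      using normal_imp_subgroup [OF Suc.IH] subgroup.subset by fastforce
  next
    fix h g
    assume "h \<in> (\<Union>x \<in> lcs G k. \<Union>g \<in> carrier G. {commutator G x g})" and g: "g \<in> carrier G"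
    then obtain x f where x: "x \<in> lcs G k" and f: "f \<in> carrier G" and h: "h = commutator G x f"
      by blast
    have "x \<in> carrier G"
      by (rule subgroup.mem_carrier [OF normal_imp_subgroup [OF Suc.IH] x])
    then have eq: "g \<otimes> h \<otimes> inv g = commutator G (gconj G g x) (gconj G g f)"
      using gconj_commutator [OF g _ f] h by (simp add: gconj_def)
    have "gconj G g x \<in> lcs G k"
      unfolding gconj_def by (rule normal.inv_op_closed2 [OF Suc.IH g x])
    then show "g \<otimes> h \<otimes> inv g \<in> (\<Union>x \<in> lcs G k. \<Union>g \<in> carrier G. {commutator G x g})"
      unfolding eq using g f by (intro UN_I [of "gconj G g x"] UN_I [of "gconj G g f"]) auto
  qed
qed

lemma subgroup_lcs: "subgroup (lcs G k) G"
  by (rule normal_imp_subgroup [OF lcs_normal])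

lemma lcs_subset_carrier: "lcs G k \<subseteq> carrier G"
  by (rule subgroup.subset [OF subgroup_lcs])

lemma lcs_mem_carrier [simp]: "x \<in> lcs G k \<Longrightarrow> x \<in> carrier G"
  using lcs_subset_carrier by blast

lemma gconj_mem_lcs: "g \<in> carrier G \<Longrightarrow> x \<in> lcs G k \<Longrightarrow> gconj G g x \<in> lcs G k"
  unfolding gconj_def by (rule normal.inv_op_closed2 [OF lcs_normal])

lemma commutator_mem_lcs_Suc:
  "x \<in> lcs G k \<Longrightarrow> g \<in> carrier G \<Longrightarrow> commutator G x g \<in> lcs G (Suc k)"
  unfolding lcs_Suc_eq by (rule generate.incl) blast

lemma commutator_mem_lcs_Suc':
  assumes "x \<in> lcs G k" and "g \<in> carrier G"
  shows "commutator G g x \<in> lcs G (Suc k)"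
proof -
  have "commutator G g x = inv (commutator G x g)"
    using assms by (simp add: inv_commutator)
  then show ?thesis
    using subgroup.m_inv_closed [OF subgroup_lcs commutator_mem_lcs_Suc [OF assms]] by simp
qed

lemma lcs_Suc_subset: "lcs G (Suc k) \<subseteq> lcs G k"
  unfolding lcs_Suc_eq
proof (rule generate_subgroup_incl [OF _ subgroup_lcs], safe)
  fix x g
  assume x: "x \<in> lcs G k" and g: "g \<in> carrier G"
  have "commutator G x g = x \<otimes> gconj G g (inv x)"
    using x g by (simp add: group_simps)
  then show "commutator G x g \<in> lcs G k"
    using x g by (simp add: gconj_mem_lcs subgroup.m_closed [OF subgroup_lcs]
        subgroup.m_inv_closed [OF subgroup_lcs])
qed

lemma lcs_antimono: "k \<le> m \<Longrightarrow> lcs G m \<subseteq> lcs G k"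
  by (rule lift_Suc_antimono_le [of "lcs G", OF lcs_Suc_subset])

lemma subgroup_commutator_mem_normal:
  assumes K: "K \<lhd> G" and x: "x \<in> carrier G"
  shows "subgroup {h \<in> carrier G. commutator G x h \<in> K} G"
proof (rule subgroupI)
  have K_sub: "subgroup K G" by (rule normal_imp_subgroup [OF K])
  show "{h \<in> carrier G. commutator G x h \<in> K} \<noteq> {}"
    using x subgroup.one_closed [OF K_sub] by (auto intro!: exI [of _ \<one>] simp: commutator_def)
  fix h h'
  assume h: "h \<in> {h \<in> carrier G. commutator G x h \<in> K}"
    and h': "h' \<in> {h \<in> carrier G. commutator G x h \<in> K}"
  have "commutator G x (inv h) = inv h \<otimes> inv (commutator G x h) \<otimes> h"
    using x h by (simp add: group_simps)
  then show "inv h \<in> {h \<in> carrier G. commutator G x h \<in> K}"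
    using h x normal.inv_op_closed1 [OF K] subgroup.m_inv_closed [OF K_sub] by simp
  have "commutator G x (h \<otimes> h') = commutator G x h \<otimes> gconj G h (commutator G x h')"
    using x h h' by (simp add: group_simps)
  then show "h \<otimes> h' \<in> {h \<in> carrier G. commutator G x h \<in> K}"
    using h h' x normal.inv_op_closed2 [OF K] subgroup.m_closed [OF K_sub]
    by (simp add: gconj_def)
qed (simp_all)

lemma commutator_mem_lcs:
  "x \<in> lcs G i \<Longrightarrow> y \<in> lcs G j \<Longrightarrow> commutator G x y \<in> lcs G (i + j + 1)"
proof (induction j arbitrary: i x y)
  case 0
  then show ?case by (simp add: commutator_mem_lcs_Suc)
next
  case (Suc j)
  have "commutator G x (commutator G w f) \<in> lcs G (i + Suc j + 1)"
    if x: "x \<in> lcs G i" and w: "w \<in> lcs G j" and f: "f \<in> carrier G" for x w f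
  proof -
    define x0 where "x0 = gconj G (inv f) x"
    have x0: "x0 \<in> lcs G i"
      unfolding x0_def using x f by (simp add: gconj_mem_lcs)
    have "x = gconj G f x0"
      using x f by (simp add: x0_def gconj_gconj)
    then have "commutator G x (commutator G w f) =
        commutator G (commutator G f x0) (gconj G x0 w) \<otimes> commutator G (commutator G x0 w) (gconj G w f)"
      using hall_witt [of x0 w f] x0 w f by simp
    moreover have "commutator G (commutator G f x0) (gconj G x0 w) \<in> lcs G (i + Suc j + 1)"
      using Suc.IH [OF commutator_mem_lcs_Suc' [OF x0 f] gconj_mem_lcs [OF _ w]] x0 by simp
    moreover have "commutator G (commutator G x0 w) (gconj G w f) \<in> lcs G (i + Suc j + 1)"
      using commutator_mem_lcs_Suc [OF Suc.IH [OF x0 w]] w f by simp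
    ultimately show ?thesis
      by (simp add: subgroup.m_closed [OF subgroup_lcs])
  qed
  then have "lcs G (Suc j) \<subseteq> {h \<in> carrier G. commutator G x h \<in> lcs G (i + Suc j + 1)}"
    unfolding lcs_Suc_eq using Suc.prems(1)
    by (intro generate_subgroup_incl subgroup_commutator_mem_normal lcs_normal) auto
  then show ?case
    using Suc.prems(2) by blast
qed

lemma lcs_mem_eq_one:
  assumes "lcs G c = {\<one>}" and "c \<le> k" and "x \<in> lcs G k"
  shows "x = \<one>"
  using assms lcs_antimono by blast

lemma lcs_commute:
  assumes "lcs G c = {\<one>}" and "c \<le> i + j + 1" and "x \<in> lcs G i" and "y \<in> lcs G j"
  shows "x \<otimes> y = y \<otimes> x"
proof -
  have "commutator G x y = \<one>"
    using lcs_mem_eq_one [OF assms(1,2) commutator_mem_lcs [OF assms(3,4)]] .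
  then show ?thesis
    using assms(3,4) by (simp add: commutator_eq_one_iff)
qed

end

definition centralizer :: "('a, 'b) monoid_scheme \<Rightarrow> 'a set \<Rightarrow> 'a set" where
  "centralizer G A = {x \<in> carrier G. \<forall>a \<in> A. x \<otimes>\<^bsub>G\<^esub> a = a \<otimes>\<^bsub>G\<^esub> x}"

lemma (in group) subgroup_centralizer:
  assumes "A \<subseteq> carrier G"
  shows "subgroup (centralizer G A) G"
proof (rule subgroupI)
  show "centralizer G A \<subseteq> carrier G" and "centralizer G A \<noteq> {}"
    using assms by (auto simp: centralizer_def intro!: exI [of _ \<one>])
next
  fix x y
  assume x: "x \<in> centralizer G A" and y: "y \<in> centralizer G A"
  have inv_comm: "inv x \<otimes> a = a \<otimes> inv x" if "a \<in> A" for a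
  proof -
    have xa: "x \<otimes> a = a \<otimes> x" and carr: "x \<in> carrier G" "a \<in> carrier G"
      using x that assms by (auto simp: centralizer_def)
    have "inv x \<otimes> a = inv x \<otimes> (a \<otimes> x) \<otimes> inv x"
      using carr by (simp add: m_assoc)
    also have "\<dots> = a \<otimes> inv x"
      using carr by (simp add: xa [symmetric] m_assoc)
    finally show ?thesis .
  qed
  have mult_comm: "x \<otimes> y \<otimes> a = a \<otimes> (x \<otimes> y)" if "a \<in> A" for a
  proof -
    have "x \<otimes> a = a \<otimes> x" "y \<otimes> a = a \<otimes> y" and carr: "x \<in> carrier G" "y \<in> carrier G" "a \<in> carrier G"
      using x y that assms by (auto simp: centralizer_def)
    then show ?thesis
      by (metis m_assoc)
  qed
  show "inv x \<in> centralizer G A" and "x \<otimes> y \<in> centralizer G A"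
    using x y inv_comm mult_comm by (auto simp: centralizer_def)
qed

lemma (in group) generate_commute:
  assumes S: "S \<subseteq> carrier G" and comm: "\<And>s t. s \<in> S \<Longrightarrow> t \<in> S \<Longrightarrow> s \<otimes> t = t \<otimes> s"
    and x: "x \<in> generate G S" and y: "y \<in> generate G S"
  shows "x \<otimes> y = y \<otimes> x"
proof -
  have "generate G S \<subseteq> centralizer G S"
    using S comm by (intro generate_subgroup_incl subgroup_centralizer) (auto simp: centralizer_def)
  then have "S \<subseteq> centralizer G (generate G S)"
    using S by (auto simp: centralizer_def)
  then have "generate G S \<subseteq> centralizer G (generate G S)"
    using S by (intro generate_subgroup_incl subgroup_centralizer generate_incl)
  then show ?thesis
    using x y by (auto simp: centralizer_def)
qed

section \<open>The nonabelian tensor product as a group\<close>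

lemma winv_Nil [simp]: "winv [] = []"
  by (simp add: winv_def)

lemma winv_append [simp]: "winv (u @ v) = winv v @ winv u"
  by (simp add: winv_def)

lemma winv_winv [simp]: "winv (winv w) = w"
  by (induction w) (auto simp: winv_def)

lemma set_winv_subset_tletters [simp]:
  "set (winv w) \<subseteq> tletters G N \<longleftrightarrow> set w \<subseteq> tletters G N"
  by (auto simp: winv_def tletters_def)

lemma set_tgen_subset_tletters [simp]:
  "set (tgen x g) \<subseteq> tletters G N \<longleftrightarrow> x \<in> N \<and> g \<in> carrier G"
  by (simp add: tgen_def tletters_def)

lemma tletters_mono: "N \<subseteq> M \<Longrightarrow> tletters G N \<subseteq> tletters G M"
  by (auto simp: tletters_def)

lemma tcong_append:
  "tcong G N u u' \<Longrightarrow> tcong G N v v' \<Longrightarrow> tcong G N (u @ v) (u' @ v')"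
  using tcong.ctxt [of G N u u' "[]" v] tcong.ctxt [of G N v v' u' "[]"] tcong.trans by fastforce

lemma tcong_append_winv:
  "set w \<subseteq> tletters G N \<Longrightarrow> tcong G N (w @ winv w) []"
proof (induction w)
  case Nil
  show ?case by (simp add: tcong.refl)
next
  case (Cons l w)
  have "tcong G N ([l] @ (w @ winv w) @ winv [l]) ([l] @ [] @ winv [l])"
    using Cons by (intro tcong.ctxt) simp
  moreover have "tcong G N ([l] @ winv [l]) []"
    using Cons.prems by (intro tcong.cancel) simp
  ultimately show ?case
    by (auto simp: winv_def intro: tcong.trans)
qed

lemma tcong_winv_append:
  "set w \<subseteq> tletters G N \<Longrightarrow> tcong G N (winv w @ w) []"
  using tcong_append_winv [of "winv w"] by simp

lemma tcong_of_relator: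
  assumes "set s \<subseteq> tletters G N" and "tcong G N (r @ winv s) []"
  shows "tcong G N r s"
proof -
  have "tcong G N r (r @ winv s @ s)"
    using tcong_append [OF tcong.refl tcong_winv_append [OF assms(1)], of r] by (simp add: tcong.sym)
  moreover have "tcong G N ((r @ winv s) @ s) ([] @ s)"
    by (rule tcong_append [OF assms(2) tcong.refl])
  ultimately show ?thesis
    by (auto intro: tcong.trans)
qed

lemma tclass_eqI: "tcong G N u v \<Longrightarrow> tclass G N u = tclass G N v"
  unfolding tclass_def by (blast intro: tcong.trans tcong.sym)

lemma mem_tclass_self: "set w \<subseteq> tletters G N \<Longrightarrow> w \<in> tclass G N w"
  by (simp add: tclass_def tcong.refl)

lemma trep_tclass:
  assumes "set w \<subseteq> tletters G N"
  shows "set (trep (tclass G N w)) \<subseteq> tletters G N" and "tcong G N w (trep (tclass G N w))"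
proof -
  have "trep (tclass G N w) \<in> tclass G N w"
    unfolding trep_def using mem_tclass_self [OF assms] by (rule someI)
  then show "set (trep (tclass G N w)) \<subseteq> tletters G N" and "tcong G N w (trep (tclass G N w))"
    by (simp_all add: tclass_def)
qed

lemma tensor_carrierE:
  assumes "A \<in> carrier (tensor G N)"
  obtains w where "set w \<subseteq> tletters G N" and "A = tclass G N w"
  using assms by (auto simp: tensor_def)

lemma tclass_mem_tensor_carrier:
  "set w \<subseteq> tletters G N \<Longrightarrow> tclass G N w \<in> carrier (tensor G N)"
  by (simp add: tensor_def)

lemma one_tensor: "\<one>\<^bsub>tensor G N\<^esub> = tclass G N []"
  by (simp add: tensor_def)

lemma tclass_mult:
  assumes "set u \<subseteq> tletters G N" and "set w \<subseteq> tletters G N"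
  shows "tclass G N u \<otimes>\<^bsub>tensor G N\<^esub> tclass G N w = tclass G N (u @ w)"
proof -
  have "tcong G N (u @ w) (trep (tclass G N u) @ trep (tclass G N w))"
    using assms by (intro tcong_append trep_tclass)
  then show ?thesis
    by (simp add: tensor_def tclass_eqI)
qed

lemma group_tensor: "group (tensor G N)"
proof (rule groupI)
  show "\<one>\<^bsub>tensor G N\<^esub> \<in> carrier (tensor G N)"
    by (simp add: one_tensor tclass_mem_tensor_carrier)
next
  fix A B C
  assume "A \<in> carrier (tensor G N)" "B \<in> carrier (tensor G N)" "C \<in> carrier (tensor G N)"
  then obtain u v w where "set u \<subseteq> tletters G N" "set v \<subseteq> tletters G N" "set w \<subseteq> tletters G N"
    and "A = tclass G N u" "B = tclass G N v" "C = tclass G N w"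
    by (metis tensor_carrierE)
  moreover have "tclass G N (winv u @ u) = tclass G N []"
    using \<open>set u \<subseteq> tletters G N\<close> by (intro tclass_eqI tcong_winv_append)
  ultimately show "A \<otimes>\<^bsub>tensor G N\<^esub> B \<in> carrier (tensor G N)"
    and "A \<otimes>\<^bsub>tensor G N\<^esub> B \<otimes>\<^bsub>tensor G N\<^esub> C = A \<otimes>\<^bsub>tensor G N\<^esub> (B \<otimes>\<^bsub>tensor G N\<^esub> C)"
    and "\<one>\<^bsub>tensor G N\<^esub> \<otimes>\<^bsub>tensor G N\<^esub> A = A"
    and "\<exists>A' \<in> carrier (tensor G N). A' \<otimes>\<^bsub>tensor G N\<^esub> A = \<one>\<^bsub>tensor G N\<^esub>"
    by (auto simp: tclass_mult tclass_mem_tensor_carrier one_tensor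
        intro!: bexI [of _ "tclass G N (winv u)"])
qed

section \<open>Generators of the tensor square\<close>

definition tensor_gen :: "('a, 'b) monoid_scheme \<Rightarrow> 'a \<Rightarrow> 'a \<Rightarrow> 'a tword set" where
  "tensor_gen G x g = tclass G (carrier G) (tgen x g)"

locale tensor_square = group G for G (structure)
begin

abbreviation T :: "'a tword set monoid" where
  "T \<equiv> tensor G (carrier G)"

abbreviation tensor_gen_op :: "'a \<Rightarrow> 'a \<Rightarrow> 'a tword set" (infixl "\<boxtimes>" 75) where
  "x \<boxtimes> g \<equiv> tensor_gen G x g"

sublocale T: group T
  by (rule group_tensor)

lemma tensor_gen_closed [simp]:
  "x \<in> carrier G \<Longrightarrow> g \<in> carrier G \<Longrightarrow> x \<boxtimes> g \<in> carrier T"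
  by (simp add: tensor_gen_def tclass_mem_tensor_carrier)

lemma tensor_gen_mult_left:
  assumes "x \<in> carrier G" "x' \<in> carrier G" "g \<in> carrier G"
  shows "(x \<otimes> x') \<boxtimes> g = (gconj G x x' \<boxtimes> gconj G x g) \<otimes>\<^bsub>T\<^esub> (x \<boxtimes> g)"
proof -
  have "tcong G (carrier G) (tgen (x \<otimes> x') g) (tgen (gconj G x x') (gconj G x g) @ tgen x g)"
    by (rule tcong_of_relator, simp add: assms, rule tcong.rel) (unfold trelators_def, use assms in blast)
  then show ?thesis
    using assms by (simp add: tensor_gen_def tclass_mult tclass_eqI)
qed

lemma tensor_gen_mult_right:
  assumes "x \<in> carrier G" "g \<in> carrier G" "g' \<in> carrier G"
  shows "x \<boxtimes> (g \<otimes> g') = (x \<boxtimes> g) \<otimes>\<^bsub>T\<^esub> (gconj G g x \<boxtimes> gconj G g g')"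
proof -
  have "tcong G (carrier G) (tgen x (g \<otimes> g')) (tgen x g @ tgen (gconj G g x) (gconj G g g'))"
    by (rule tcong_of_relator, simp add: assms, rule tcong.rel) (unfold trelators_def, use assms in blast)
  then show ?thesis
    using assms by (simp add: tensor_gen_def tclass_mult tclass_eqI)
qed

lemma tensor_gen_one_right [simp]: "x \<in> carrier G \<Longrightarrow> x \<boxtimes> \<one> = \<one>\<^bsub>T\<^esub>"
  using tensor_gen_mult_right [of x \<one> \<one>] by simp

lemma tensor_gen_one_left [simp]: "g \<in> carrier G \<Longrightarrow> \<one> \<boxtimes> g = \<one>\<^bsub>T\<^esub>"
  using tensor_gen_mult_left [of \<one> \<one> g] by simp

lemma tensor_gen_inv_right:
  assumes "y \<in> carrier G" "z \<in> carrier G"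
  shows "y \<boxtimes> inv z = inv\<^bsub>T\<^esub> (gconj G (inv z) y \<boxtimes> z)"
proof -
  have "(y \<boxtimes> inv z) \<otimes>\<^bsub>T\<^esub> (gconj G (inv z) y \<boxtimes> z) = \<one>\<^bsub>T\<^esub>"
    using tensor_gen_mult_right [of y "inv z" z] assms by (simp add: gconj_def m_assoc)
  then show ?thesis
    using assms by (simp add: T.inv_equality)
qed

lemma tensor_gen_mult_right_commuting:
  assumes "y \<in> carrier G" "g \<in> carrier G" "f \<in> carrier G" and "g \<otimes> y = y \<otimes> g"
  shows "y \<boxtimes> (g \<otimes> f) = (y \<boxtimes> g) \<otimes>\<^bsub>T\<^esub> (y \<boxtimes> (commutator G g f \<otimes> f))"
  using tensor_gen_mult_right [of y g f] assms by (simp add: gconj_eq_self gconj_eq_commutator_mult)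

lemma tensor_gen_swap:
  assumes m: "m \<in> carrier G" and n: "n \<in> carrier G" and a: "a \<in> carrier G" and b: "b \<in> carrier G"
  shows "(m \<boxtimes> n) \<otimes>\<^bsub>T\<^esub> (gconj G (n \<otimes> m) a \<boxtimes> gconj G (n \<otimes> m) b) =
         (gconj G (m \<otimes> n) a \<boxtimes> gconj G (m \<otimes> n) b) \<otimes>\<^bsub>T\<^esub> (m \<boxtimes> n)"
proof -
  define P where "P = gconj G m a \<boxtimes> gconj G m n"
  define Q where "Q = gconj G n m \<boxtimes> gconj G n b"
  have PQ: "P \<in> carrier T" "Q \<in> carrier T"
    using m n a b by (simp_all add: P_def Q_def)
  \<comment> \<open>both expansions of \<open>(m \<otimes> a) \<boxtimes> (n \<otimes> b)\<close> start with \<open>P\<close> and end with \<open>Q\<close>\<close>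
  have "(m \<otimes> a) \<boxtimes> (n \<otimes> b) = ((m \<otimes> a) \<boxtimes> n) \<otimes>\<^bsub>T\<^esub> ((gconj G n m \<otimes> gconj G n a) \<boxtimes> gconj G n b)"
    using m n a b by (simp add: tensor_gen_mult_right gconj_mult)
  also have "\<dots> = P \<otimes>\<^bsub>T\<^esub> ((m \<boxtimes> n) \<otimes>\<^bsub>T\<^esub> (gconj G (n \<otimes> m) a \<boxtimes> gconj G (n \<otimes> m) b)) \<otimes>\<^bsub>T\<^esub> Q"
    using m n a b by (simp add: tensor_gen_mult_left P_def Q_def gconj_gconj_conj T.m_assoc)
  finally have expand_right_first: "(m \<otimes> a) \<boxtimes> (n \<otimes> b) =
      P \<otimes>\<^bsub>T\<^esub> ((m \<boxtimes> n) \<otimes>\<^bsub>T\<^esub> (gconj G (n \<otimes> m) a \<boxtimes> gconj G (n \<otimes> m) b)) \<otimes>\<^bsub>T\<^esub> Q" .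
  have "(m \<otimes> a) \<boxtimes> (n \<otimes> b) = (gconj G m a \<boxtimes> (gconj G m n \<otimes> gconj G m b)) \<otimes>\<^bsub>T\<^esub> (m \<boxtimes> (n \<otimes> b))"
    using m n a b by (simp add: tensor_gen_mult_left gconj_mult)
  also have "\<dots> = P \<otimes>\<^bsub>T\<^esub> ((gconj G (m \<otimes> n) a \<boxtimes> gconj G (m \<otimes> n) b) \<otimes>\<^bsub>T\<^esub> (m \<boxtimes> n)) \<otimes>\<^bsub>T\<^esub> Q"
    using m n a b by (simp add: tensor_gen_mult_right P_def Q_def gconj_gconj_conj T.m_assoc)
  finally have expand_left_first: "(m \<otimes> a) \<boxtimes> (n \<otimes> b) =
      P \<otimes>\<^bsub>T\<^esub> ((gconj G (m \<otimes> n) a \<boxtimes> gconj G (m \<otimes> n) b) \<otimes>\<^bsub>T\<^esub> (m \<boxtimes> n)) \<otimes>\<^bsub>T\<^esub> Q" .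
  have "P \<otimes>\<^bsub>T\<^esub> ((m \<boxtimes> n) \<otimes>\<^bsub>T\<^esub> (gconj G (n \<otimes> m) a \<boxtimes> gconj G (n \<otimes> m) b)) \<otimes>\<^bsub>T\<^esub> Q =
      P \<otimes>\<^bsub>T\<^esub> ((gconj G (m \<otimes> n) a \<boxtimes> gconj G (m \<otimes> n) b) \<otimes>\<^bsub>T\<^esub> (m \<boxtimes> n)) \<otimes>\<^bsub>T\<^esub> Q"
    using expand_right_first expand_left_first by (simp only:)
  then show ?thesis
    using PQ m n a b by simp
qed

lemma tensor_gen_conj:
  assumes "m \<in> carrier G" and "n \<in> carrier G" and "a \<in> carrier G" and "b \<in> carrier G"
  shows "(m \<boxtimes> n) \<otimes>\<^bsub>T\<^esub> (a \<boxtimes> b) =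
         (gconj G (commutator G m n) a \<boxtimes> gconj G (commutator G m n) b) \<otimes>\<^bsub>T\<^esub> (m \<boxtimes> n)"
proof -
  have "gconj G (n \<otimes> m) (gconj G (inv (n \<otimes> m)) x) = x" and
    "gconj G (m \<otimes> n) (gconj G (inv (n \<otimes> m)) x) = gconj G (commutator G m n) x"
    if "x \<in> carrier G" for x
    using assms that by (simp_all add: gconj_gconj commutator_def m_assoc inv_mult_group)
  then show ?thesis
    using tensor_gen_swap [of m n "gconj G (inv (n \<otimes> m)) a" "gconj G (inv (n \<otimes> m)) b"] assms
    by simp
qed

lemma tensor_gen_commute:
  assumes "m \<in> carrier G" "n \<in> carrier G" "a \<in> carrier G" "b \<in> carrier G" "m \<otimes> n = n \<otimes> m"
  shows "(m \<boxtimes> n) \<otimes>\<^bsub>T\<^esub> (a \<boxtimes> b) = (a \<boxtimes> b) \<otimes>\<^bsub>T\<^esub> (m \<boxtimes> n)"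
  using tensor_gen_conj [of m n a b] assms by (simp add: commutator_eq_one_iff [THEN iffD2])

lemma tclass_letter_mem_generate:
  assumes "l \<in> tletters G N" and "N \<subseteq> carrier G"
  shows "tclass G (carrier G) [l] \<in> generate T {x \<boxtimes> g | x g. x \<in> N \<and> g \<in> carrier G}"
proof -
  obtain b x g where l: "l = (b, x, g)" and x: "x \<in> N" and g: "g \<in> carrier G"
    using assms(1) by (auto simp: tletters_def)
  have xg: "x \<boxtimes> g \<in> {x \<boxtimes> g | x g. x \<in> N \<and> g \<in> carrier G}"
    using x g by blast
  have xg_carrier: "x \<in> carrier G" using x assms(2) by blast
  show ?thesis
  proof (cases b)
    case True
    then show ?thesis
      using generate.incl [OF xg] by (simp add: l tensor_gen_def tgen_def)
  next
    case False
    have "tclass G (carrier G) [(False, x, g)] \<otimes>\<^bsub>T\<^esub> x \<boxtimes> g = \<one>\<^bsub>T\<^esub>"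
      using tcong_winv_append [of "tgen x g" G "carrier G"] xg_carrier g
      by (simp add: tensor_gen_def tclass_mult one_tensor tclass_eqI tgen_def winv_def tletters_def)
    then have "tclass G (carrier G) [(False, x, g)] = inv\<^bsub>T\<^esub> (x \<boxtimes> g)"
      using xg_carrier g by (simp add: T.inv_equality tclass_mem_tensor_carrier tletters_def)
    then show ?thesis
      using generate.inv [OF xg] False by (simp add: l)
  qed
qed

lemma tclass_mem_generate:
  assumes "N \<subseteq> carrier G" and "set w \<subseteq> tletters G N"
  shows "tclass G (carrier G) w \<in> generate T {x \<boxtimes> g | x g. x \<in> N \<and> g \<in> carrier G}"
  using assms(2)
proof (induction w)
  case Nil
  show ?case by (simp add: generate.one flip: one_tensor)
next
  case (Cons l w)
  have "set (l # w) \<subseteq> tletters G (carrier G)"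
    using Cons.prems tletters_mono [OF assms(1)] by auto
  then have "tclass G (carrier G) (l # w) = tclass G (carrier G) [l] \<otimes>\<^bsub>T\<^esub> tclass G (carrier G) w"
    using tclass_mult [of "[l]" G "carrier G" w] by simp
  then show ?case
    using Cons tclass_letter_mem_generate [OF _ assms(1)] by (simp add: generate.eng)
qed

lemma tensor_incl_mem_generate:
  assumes "N \<subseteq> carrier G" and "A \<in> carrier (tensor G N)"
  shows "tensor_incl G N A \<in> generate T {x \<boxtimes> g | x g. x \<in> N \<and> g \<in> carrier G}"
proof -
  obtain w where "set w \<subseteq> tletters G N" and "A = tclass G N w"
    using assms(2) by (rule tensor_carrierE)
  then have "set (trep A) \<subseteq> tletters G N"
    by (simp add: trep_tclass)
  then show ?thesis
    unfolding tensor_incl_def by (rule tclass_mem_generate [OF assms(1)])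
qed

end

section \<open>Tensor squares of nilpotent groups\<close>

definition (in tensor_square) tensor_trivial :: "'a set \<Rightarrow> 'a set \<Rightarrow> bool" where
  "tensor_trivial Y Z \<longleftrightarrow> (\<forall>y \<in> Y. \<forall>z \<in> Z. y \<boxtimes> z = \<one>\<^bsub>T\<^esub>)"

locale nilpotent_tensor_square = tensor_square +
  fixes c :: nat
  assumes lcs_trivial: "lcs G c = {\<one>}"
begin

lemma tensor_trivial_lcs_of_le:
  assumes "c \<le> a \<or> c \<le> b"
  shows "tensor_trivial (lcs G a) (lcs G b)"
  unfolding tensor_trivial_def
proof (intro ballI)
  fix y z
  assume y: "y \<in> lcs G a" and z: "z \<in> lcs G b"
  then have "y = \<one> \<or> z = \<one>"
    using assms lcs_mem_eq_one [OF lcs_trivial] by blast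
  then show "y \<boxtimes> z = \<one>\<^bsub>T\<^esub>"
    using y z by auto
qed

lemma tensor_gen_mult_right_absorb:
  assumes "\<And>b'. b \<le> b' \<Longrightarrow> tensor_trivial (lcs G a) (lcs G b')"
    and "c \<le> a + b" and "y \<in> lcs G a" and "z \<in> lcs G b" and "f \<in> carrier G"
  shows "y \<boxtimes> (z \<otimes> f) = y \<boxtimes> f"
  using assms
proof (induction "c - b" arbitrary: b z rule: less_induct)
  case less
  show ?case
  proof (cases "c \<le> b")
    case True
    then show ?thesis
      using lcs_mem_eq_one [OF lcs_trivial True less.prems(4)] less.prems(5) by simp
  next
    case False
    have yz: "y \<boxtimes> z = \<one>\<^bsub>T\<^esub>"
      using less.prems(1) [of b] less.prems(3,4) by (simp add: tensor_trivial_def)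
    have "z \<otimes> y = y \<otimes> z"
      using lcs_commute [OF lcs_trivial _ less.prems(4,3)] less.prems(2) by simp
    then have "y \<boxtimes> (z \<otimes> f) = y \<boxtimes> (commutator G z f \<otimes> f)"
      using tensor_gen_mult_right_commuting [of y z f] yz less.prems(3-5) by simp
    also have "\<dots> = y \<boxtimes> f"
      using False less.prems by (intro less.hyps [of "Suc b"]) (auto intro: commutator_mem_lcs_Suc)
    finally show ?thesis .
  qed
qed

lemma tensor_gen_commutator_eq_one:
  assumes "c \<le> 2 * a + 2" and "c \<le> a + Suc b"
    and trivial_right: "\<And>b'. Suc (Suc b) \<le> b' \<Longrightarrow> tensor_trivial (lcs G a) (lcs G b')"
    and trivial_down: "tensor_trivial (lcs G (Suc a)) (lcs G b)"
    and y: "y \<in> lcs G a" and w: "w \<in> lcs G b" and f: "f \<in> carrier G"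
  shows "y \<boxtimes> commutator G w f = \<one>\<^bsub>T\<^esub>"
proof -
  define k where "k = commutator G w f"
  define p where "p = commutator G f y"
  have k: "k \<in> lcs G (Suc b)" and p: "p \<in> lcs G (Suc a)"
    using y w f by (simp_all add: k_def p_def commutator_mem_lcs_Suc commutator_mem_lcs_Suc')
  have yw: "w \<otimes> y = y \<otimes> w"
    by (rule lcs_commute [OF lcs_trivial _ w y]) (use assms(2) in linarith)
  have ky: "k \<otimes> y = y \<otimes> k"
    by (rule lcs_commute [OF lcs_trivial _ k y]) (use assms(2) in linarith)
  have pw: "p \<otimes> w = w \<otimes> p"
    by (rule lcs_commute [OF lcs_trivial _ p w]) (use assms(2) in linarith)
  have py: "p \<otimes> y = y \<otimes> p"
    by (rule lcs_commute [OF lcs_trivial _ p y]) (use assms(1) in linarith)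
  have "y \<boxtimes> (w \<otimes> f) = (y \<boxtimes> w) \<otimes>\<^bsub>T\<^esub> (y \<boxtimes> (k \<otimes> f))"
    using tensor_gen_mult_right_commuting [of y w f] y w f yw by (simp add: k_def)
  also have "y \<boxtimes> (k \<otimes> f) = (y \<boxtimes> k) \<otimes>\<^bsub>T\<^esub> (y \<boxtimes> (commutator G k f \<otimes> f))"
    using tensor_gen_mult_right_commuting [of y k f] y k f ky by simp
  also have "y \<boxtimes> (commutator G k f \<otimes> f) = y \<boxtimes> f"
    using assms(2) y k f
    by (intro tensor_gen_mult_right_absorb [OF trivial_right]) (auto intro: commutator_mem_lcs_Suc)
  finally have "y \<boxtimes> (w \<otimes> f) = (y \<boxtimes> w) \<otimes>\<^bsub>T\<^esub> ((y \<boxtimes> k) \<otimes>\<^bsub>T\<^esub> (y \<boxtimes> f))" .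
  moreover have "y \<boxtimes> (w \<otimes> f) = (y \<boxtimes> f) \<otimes>\<^bsub>T\<^esub> (y \<boxtimes> w)"
  proof -
    have "y \<boxtimes> (w \<otimes> f) = y \<boxtimes> (f \<otimes> gconj G (inv f) w)"
      using w f by (simp add: gconj_def m_assoc)
    also have "\<dots> = (y \<boxtimes> f) \<otimes>\<^bsub>T\<^esub> (gconj G f y \<boxtimes> gconj G f (gconj G (inv f) w))"
      using y w f by (simp add: tensor_gen_mult_right)
    also have "gconj G f (gconj G (inv f) w) = w"
      using w f by (simp add: gconj_gconj)
    also have "gconj G f y = p \<otimes> y"
      using y f by (simp add: p_def gconj_eq_commutator_mult)
    also have "(p \<otimes> y) \<boxtimes> w = (y \<boxtimes> w) \<otimes>\<^bsub>T\<^esub> (p \<boxtimes> w)"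
      using tensor_gen_mult_left [of p y w] y w p py pw by (simp add: gconj_eq_self)
    also have "p \<boxtimes> w = \<one>\<^bsub>T\<^esub>"
      using trivial_down p w by (simp add: tensor_trivial_def)
    finally show ?thesis
      using y w f by simp
  qed
  moreover have "(y \<boxtimes> w) \<otimes>\<^bsub>T\<^esub> (y \<boxtimes> f) = (y \<boxtimes> f) \<otimes>\<^bsub>T\<^esub> (y \<boxtimes> w)"
    using y w f yw by (intro tensor_gen_commute) auto
  ultimately show ?thesis
    using y w f k by (simp add: k_def)
qed

text \<open>Quantifying over all conjugates of \<open>z\<close> is what makes this set closed under products.\<close>

lemma subgroup_tensor_trivial_conj:
  assumes "c \<le> a + k + 1"
  shows "subgroup {z \<in> lcs G k. \<forall>g \<in> carrier G. \<forall>y \<in> lcs G a. y \<boxtimes> gconj G g z = \<one>\<^bsub>T\<^esub>} G"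
    (is "subgroup ?H G")
proof (rule subgroupI)
  show "?H \<subseteq> carrier G"
    by auto
  have "\<one> \<in> ?H"
    using subgroup.one_closed [OF subgroup_lcs] by simp
  then show "?H \<noteq> {}"
    by blast
next
  fix z z'
  assume z: "z \<in> ?H" and z': "z' \<in> ?H"
  have z_lcs: "z \<in> lcs G k" and z'_lcs: "z' \<in> lcs G k"
    using z z' by simp_all
  have "y \<boxtimes> gconj G g (inv z) = \<one>\<^bsub>T\<^esub>" if g: "g \<in> carrier G" and y: "y \<in> lcs G a" for g y
  proof -
    define u where "u = gconj G g z"
    have u: "u \<in> carrier G"
      using g z_lcs by (simp add: u_def)
    have "gconj G (inv u) y \<boxtimes> u = \<one>\<^bsub>T\<^esub>"
      using z g u y by (simp add: u_def gconj_mem_lcs)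
    then show ?thesis
      using tensor_gen_inv_right [of y u] y u g z_lcs by (simp add: gconj_inv u_def)
  qed
  then show "inv z \<in> ?H"
    using z_lcs by (simp add: subgroup.m_inv_closed [OF subgroup_lcs])
  have "y \<boxtimes> gconj G g (z \<otimes> z') = \<one>\<^bsub>T\<^esub>" if g: "g \<in> carrier G" and y: "y \<in> lcs G a" for g y
  proof -
    define u where "u = gconj G g z"
    have u: "u \<in> lcs G k"
      using g z_lcs by (simp add: u_def gconj_mem_lcs)
    have "u \<otimes> y = y \<otimes> u"
      using lcs_commute [OF lcs_trivial _ u y] assms by simp
    then have "y \<boxtimes> gconj G g (z \<otimes> z') = (y \<boxtimes> u) \<otimes>\<^bsub>T\<^esub> (y \<boxtimes> gconj G (u \<otimes> g) z')"
      using tensor_gen_mult_right [of y u "gconj G g z'"] g y u z_lcs z'_lcs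
      by (simp add: u_def gconj_mult gconj_gconj gconj_eq_self)
    then show ?thesis
      using z z' g y u by (simp add: u_def)
  qed
  then show "z \<otimes> z' \<in> ?H"
    using z_lcs z'_lcs by (simp add: subgroup.m_closed [OF subgroup_lcs])
qed

lemma tensor_trivial_lcs_Suc:
  assumes "c \<le> a + Suc b"
    and gens: "\<And>y w f. y \<in> lcs G a \<Longrightarrow> w \<in> lcs G b \<Longrightarrow> f \<in> carrier G \<Longrightarrow>
                 y \<boxtimes> commutator G w f = \<one>\<^bsub>T\<^esub>"
  shows "tensor_trivial (lcs G a) (lcs G (Suc b))"
proof -
  define H where
    "H = {z \<in> lcs G (Suc b). \<forall>g \<in> carrier G. \<forall>y \<in> lcs G a. y \<boxtimes> gconj G g z = \<one>\<^bsub>T\<^esub>}"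
  have "(\<Union>w \<in> lcs G b. \<Union>f \<in> carrier G. {commutator G w f}) \<subseteq> H"
    using gens by (auto simp: H_def gconj_commutator gconj_mem_lcs commutator_mem_lcs_Suc)
  moreover have "subgroup H G"
    unfolding H_def using assms(1) by (intro subgroup_tensor_trivial_conj) simp
  ultimately have "lcs G (Suc b) \<subseteq> H"
    unfolding lcs_Suc_eq by (rule generate_subgroup_incl)
  then show ?thesis
    by (force simp: tensor_trivial_def H_def)
qed

lemma tensor_trivial_lcs:
  assumes "c \<le> 2 * a + 2" and "c \<le> a + b"
  shows "tensor_trivial (lcs G a) (lcs G b)"
proof -
  have "tensor_trivial (lcs G a) (lcs G b)"
    if "2 * c - (a + b) = d" "c \<le> 2 * a + 2" "c \<le> a + b" for d a b
    using that
  \<comment> \<open>the step to \<open>(a, b + 1)\<close> uses \<open>(a, b')\<close> with \<open>b' \<ge> b + 2\<close>, of larger sum, and \<open>(a + 1, b)\<close>\<close>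
  proof (induction d arbitrary: a b rule: less_induct)
    case (less d)
    from less.prems show ?case
    proof (induction b arbitrary: a)
      case 0
      then show ?case by (intro tensor_trivial_lcs_of_le) simp
    next
      case (Suc b)
      consider "c \<le> a \<or> c \<le> Suc b" | "a < c" "Suc b < c"
        by linarith
      then show ?case
      proof cases
        case 1
        then show ?thesis by (rule tensor_trivial_lcs_of_le)
      next
        case 2
        have "tensor_trivial (lcs G a) (lcs G b')" if "Suc (Suc b) \<le> b'" for b'
          using Suc.prems 2 that by (intro less.IH [of "2 * c - (a + b')"]) auto
        moreover have "tensor_trivial (lcs G (Suc a)) (lcs G b)"
          using Suc.prems by (intro Suc.IH) auto
        ultimately show ?thesis
          using Suc.prems
          by (intro tensor_trivial_lcs_Suc tensor_gen_commutator_eq_one) auto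
      qed
    qed
  qed
  then show ?thesis
    using assms by blast
qed

lemma tensor_gen_lcs_commute:
  assumes "c \<le> 2 * a + 2" and x: "x \<in> lcs G a" and y: "y \<in> lcs G a"
    and g: "g \<in> carrier G" and h: "h \<in> carrier G"
  shows "(x \<boxtimes> g) \<otimes>\<^bsub>T\<^esub> (y \<boxtimes> h) = (y \<boxtimes> h) \<otimes>\<^bsub>T\<^esub> (x \<boxtimes> g)"
proof -
  define k where "k = commutator G x g"
  have k: "k \<in> lcs G (Suc a)"
    using x g by (simp add: k_def commutator_mem_lcs_Suc)
  have "gconj G k y = y"
    using lcs_commute [OF lcs_trivial _ k y] assms(1) k y by (simp add: gconj_eq_self)
  moreover have "y \<boxtimes> gconj G k h = y \<boxtimes> h"
    unfolding gconj_eq_commutator_mult [OF lcs_mem_carrier [OF k] h]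
    using assms(1) y k h
    by (intro tensor_gen_mult_right_absorb [where b = "Suc (Suc a)"] tensor_trivial_lcs)
       (auto intro: commutator_mem_lcs_Suc)
  ultimately show ?thesis
    using tensor_gen_conj [of x g y h] x y g h by (simp add: k_def)
qed

end

theorem lemma5p1:
  fixes G (structure) and c :: nat
  assumes "group G" and "nilpotent_class G c"
  defines "n \<equiv> nat \<lceil>real c / 2\<rceil>"
  shows "\<forall>a \<in> tensor_incl G (gamma G n) ` carrier (tensor G (gamma G n)).
         \<forall>b \<in> tensor_incl G (gamma G n) ` carrier (tensor G (gamma G n)).
           a \<otimes>\<^bsub>tensor G (carrier G)\<^esub> b = b \<otimes>\<^bsub>tensor G (carrier G)\<^esub> a"
proof -
  have "lcs G c = {\<one>}"
    using assms(2) by (simp add: nilpotent_class_def gamma_def)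
  then interpret nilpotent_tensor_square G c
    by (simp add: nilpotent_tensor_square_def nilpotent_tensor_square_axioms_def
        tensor_square_def assms(1))
  have "real c / 2 \<le> of_int \<lceil>real c / 2\<rceil>"
    by (rule le_of_int_ceiling)
  then have bound: "c \<le> 2 * (n - 1) + 2"
    unfolding n_def by linarith
  define S where "S = {tensor_gen G x g | x g. x \<in> lcs G (n - 1) \<and> g \<in> carrier G}"
  have S_carrier: "S \<subseteq> carrier T"
    by (auto simp: S_def)
  have S_commute: "s \<otimes>\<^bsub>T\<^esub> t = t \<otimes>\<^bsub>T\<^esub> s" if "s \<in> S" "t \<in> S" for s t
    using that tensor_gen_lcs_commute [OF bound] by (auto simp: S_def)
  have "tensor_incl G (lcs G (n - 1)) ` carrier (tensor G (lcs G (n - 1))) \<subseteq> generate T S"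
    using tensor_incl_mem_generate [OF lcs_subset_carrier] by (auto simp: S_def)
  then show ?thesis
    unfolding gamma_def using T.generate_commute [OF S_carrier S_commute] by blast
qed

end
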